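(* Let $G_i$ be a graph of order $n_i$, minimum degree $\delta_i$ and maximum degree $\Delta_i$, $i\in\{1,2\}$. Let $k_i\in\{2-\Delta_i,\dots,\Delta_i\}$ for $i\in\{1,2\}$ and let $k'=\max\{k_1-\delta_2,\;k_2-\delta_1,\;\min\{k_2+\Delta_1,\,k_1+\Delta_2\}\}$. Then for every integer $k\in\{k',\dots,\Delta_1+\Delta_2\}$, $$\phi_k^o(G_1\times G_2)\ge n_1\phi_{k_2}^o(G_2)+n_2\phi_{k_1}^o(G_1)-\phi_{k_1}^o(G_1)\phi_{k_2}^o(G_2).$$
   Context: All graphs are finite and simple. For a graph $G=(V,E)$, a set $S\subseteq V$ and $v\in V$, let $\delta_S(v)=|\{u\in S: uv\in E\}|$, $\overline{S}=V\setminus S$, and let $\partial S$ be the set of vertices of $\overline S$ adjacent to at least one vertex of $S$. For an integer $k$, a non-empty set $S\subseteq V$ is an offensive $k$-alliance if $\delta_S(v)\ge \delta_{\overline S}(v)+k$ for every $v\in \partial S$. A set $X\subseteq V$ is an offensive $k$-alliance free set ($k$-oaf set) if no offensive $k$-alliance $S$ satisfies $S\subseteq X$. $\phi_k^o(G)$ denotes the maximum cardinality of a $k$-oaf set in $G$. The Cartesian product $G_1\times G_2$ of $G_1=(V_1,E_1)$, $G_2=(V_2,E_2)$ has vertex set $V_1\times V_2$, with $(a,b)$ adjacent to $(c,d)$ iff either $a=c$ and $bd\in E_2$, or $b=d$ and $ac\in E_1$. *)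

theory Defs
  imports Main
begin

definition graph :: "'a set \<Rightarrow> ('a \<Rightarrow> 'a \<Rightarrow> bool) \<Rightarrow> bool" where
  "graph V E \<longleftrightarrow> finite V \<and> (\<forall>u v. E u v \<longrightarrow> u \<in> V \<and> v \<in> V) \<and>
     (\<forall>u v. E u v \<longrightarrow> E v u) \<and> (\<forall>v. \<not> E v v)"

definition deg :: "'a set \<Rightarrow> ('a \<Rightarrow> 'a \<Rightarrow> bool) \<Rightarrow> 'a \<Rightarrow> nat" where
  "deg V E v = card {u \<in> V. E v u}"

definition min_deg :: "'a set \<Rightarrow> ('a \<Rightarrow> 'a \<Rightarrow> bool) \<Rightarrow> nat" where
  "min_deg V E = Min (deg V E ` V)"

definition max_deg :: "'a set \<Rightarrow> ('a \<Rightarrow> 'a \<Rightarrow> bool) \<Rightarrow> nat" where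
  "max_deg V E = Max (deg V E ` V)"

definition deltaS :: "('a \<Rightarrow> 'a \<Rightarrow> bool) \<Rightarrow> 'a set \<Rightarrow> 'a \<Rightarrow> nat" where
  "deltaS E S v = card {u \<in> S. E u v}"

definition boundary :: "'a set \<Rightarrow> ('a \<Rightarrow> 'a \<Rightarrow> bool) \<Rightarrow> 'a set \<Rightarrow> 'a set" where
  "boundary V E S = {v \<in> V - S. \<exists>u \<in> S. E u v}"

definition off_alliance :: "'a set \<Rightarrow> ('a \<Rightarrow> 'a \<Rightarrow> bool) \<Rightarrow> int \<Rightarrow> 'a set \<Rightarrow> bool" where
  "off_alliance V E k S \<longleftrightarrow> S \<subseteq> V \<and> S \<noteq> {} \<and>
     (\<forall>v \<in> boundary V E S. int (deltaS E S v) \<ge> int (deltaS E (V - S) v) + k)"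

definition oaf :: "'a set \<Rightarrow> ('a \<Rightarrow> 'a \<Rightarrow> bool) \<Rightarrow> int \<Rightarrow> 'a set \<Rightarrow> bool" where
  "oaf V E k X \<longleftrightarrow> X \<subseteq> V \<and> (\<forall>S. off_alliance V E k S \<longrightarrow> \<not> S \<subseteq> X)"

definition phi_o :: "'a set \<Rightarrow> ('a \<Rightarrow> 'a \<Rightarrow> bool) \<Rightarrow> int \<Rightarrow> nat" where
  "phi_o V E k = Max (card ` {X. oaf V E k X})"

definition cart_edge :: "('a \<Rightarrow> 'a \<Rightarrow> bool) \<Rightarrow> ('b \<Rightarrow> 'b \<Rightarrow> bool) \<Rightarrow> ('a \<times> 'b) \<Rightarrow> ('a \<times> 'b) \<Rightarrow> bool" where
  "cart_edge E1 E2 x y \<longleftrightarrow>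
     (fst x = fst y \<and> E2 (snd x) (snd y)) \<or> (snd x = snd y \<and> E1 (fst x) (fst y))"

end

theory Submission
  imports Defs
begin

(* Let X1 be a maximum k1-oaf set of G1 and X2 a maximum k2-oaf set
   of G2.  We show that X = X1 x V2 \<union> V1 x X2 is a k-oaf set of G1 x G2; by
   inclusion-exclusion |X| = n2 |X1| + n1 |X2| - |X1| |X2|, which gives the bound.

   The number of neighbours of (a,b) in a set T of the product splits into the
   neighbours in the row of a and in the column of b (deltaS_cart).  Suppose an
   offensive k-alliance S lies inside X.  If the projection of S to G1 lies in X1,
   some boundary vertex of it witnesses that it is no k1-alliance, and lifting it
   to the product (its whole G2-row lies outside S) shows S is no k-alliance when
   k >= k1 - delta2 (projection_not_alliance).  Otherwise some row of S is a
   nonempty subset of X2; a vertex witnessing that this row is no k2-alliance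
   shows S is no k-alliance when k >= k2 + Delta1 (row_not_alliance).  This yields
   the one-sided lemma product_oaf_one_side; the symmetric case follows by
   transporting alliances along the coordinate swap, an isomorphism
   G1 x G2 -> G2 x G1 (off_alliance_image). *)

section \<open>Degrees and neighbourhood counts\<close>

lemma deltaS_mono: "finite B \<Longrightarrow> A \<subseteq> B \<Longrightarrow> deltaS E A v \<le> deltaS E B v"
  unfolding deltaS_def by (rule card_mono) auto

lemma deltaS_le_max_deg:
  assumes "graph V E" "C \<subseteq> V" "v \<in> V"
  shows "deltaS E C v \<le> max_deg V E"
proof -
  have "deltaS E C v \<le> deg V E v"
    unfolding deltaS_def deg_def using assms unfolding graph_def
    by (intro card_mono) auto
  also have "\<dots> \<le> max_deg V E"
    using assms unfolding max_deg_def graph_def by auto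
  finally show ?thesis .
qed

lemma min_deg_le_deltaS:
  assumes "graph V E" "v \<in> V"
  shows "min_deg V E \<le> deltaS E V v"
proof -
  have "deltaS E V v = deg V E v"
    unfolding deltaS_def deg_def using assms(1) unfolding graph_def
    by (intro arg_cong[where f=card]) blast
  moreover have "min_deg V E \<le> deg V E v"
    using assms unfolding min_deg_def graph_def by auto
  ultimately show ?thesis by simp
qed

lemma deltaS_cart:
  assumes irr: "\<forall>v. \<not> E2 v v" and fin: "finite T"
  shows "deltaS (cart_edge E1 E2) T (a, b)
           = deltaS E2 {y. (a, y) \<in> T} b + deltaS E1 {x. (x, b) \<in> T} a"
proof -
  let ?R = "{y \<in> {y. (a, y) \<in> T}. E2 y b}" and ?C = "{x \<in> {x. (x, b) \<in> T}. E1 x a}"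
  have split: "{u \<in> T. cart_edge E1 E2 u (a, b)} = Pair a ` ?R \<union> (\<lambda>x. (x, b)) ` ?C"
    by (auto simp: cart_edge_def)
  have disjoint: "Pair a ` ?R \<inter> (\<lambda>x. (x, b)) ` ?C = {}"
    using irr by auto
  have "finite ?R"
    using finite_vimageI[OF fin, of "Pair a"] by (simp add: vimage_def inj_on_def)
  moreover have "finite ?C"
    using finite_vimageI[OF fin, of "\<lambda>x. (x, b)"] by (simp add: vimage_def inj_on_def)
  ultimately show ?thesis
    unfolding deltaS_def split
    using disjoint by (simp add: card_Un_disjoint card_image inj_on_def)
qed

section \<open>Offensive alliance free sets\<close>

lemma finite_oaf_sets: "finite V \<Longrightarrow> finite {X. oaf V E k X}"
  by (rule finite_subset[of _ "Pow V"]) (auto simp: oaf_def)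

lemma phi_o_attained:
  assumes "graph V E"
  obtains X where "oaf V E k X" "card X = phi_o V E k"
proof -
  have "finite {X. oaf V E k X}"
    using assms unfolding graph_def by (intro finite_oaf_sets) blast
  moreover have "oaf V E k {}"
    unfolding oaf_def off_alliance_def by blast
  ultimately have "phi_o V E k \<in> card ` {X. oaf V E k X}"
    unfolding phi_o_def by (intro Max_in) auto
  then show ?thesis using that by auto
qed

lemma card_le_phi_o: "finite V \<Longrightarrow> oaf V E k X \<Longrightarrow> card X \<le> phi_o V E k"
  unfolding phi_o_def using finite_oaf_sets by (intro Max_ge) auto

lemma oaf_violating_vertex:
  assumes "oaf V E k X" "A \<subseteq> X" "A \<noteq> {}"
  obtains a a' where "a' \<in> A" "E a' a" "a \<in> V" "a \<notin> A"
    "int (deltaS E A a) < int (deltaS E (V - A) a) + k"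
proof -
  have "\<not> off_alliance V E k A" "A \<subseteq> V"
    using assms unfolding oaf_def by auto
  then obtain a where "a \<in> boundary V E A" "int (deltaS E A a) < int (deltaS E (V - A) a) + k"
    using assms(3) unfolding off_alliance_def by force
  then show ?thesis using that unfolding boundary_def by auto
qed

lemma off_alliance_image:
  assumes inj: "inj f" and edges: "\<And>u v. E' (f u) (f v) \<longleftrightarrow> E u v"
    and S: "off_alliance V E k S"
  shows "off_alliance (f ` V) E' k (f ` S)"
proof -
  have deltaS_image: "deltaS E' (f ` T) (f v) = deltaS E T v" for T v
  proof -
    have "{u \<in> f ` T. E' u (f v)} = f ` {u \<in> T. E u v}"
      using edges by blast
    then show ?thesis
      unfolding deltaS_def using card_image[OF inj_on_subset[OF inj subset_UNIV]] by simp
  qed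
  have boundary_image: "w \<in> f ` boundary V E S" if w: "w \<in> boundary (f ` V) E' (f ` S)" for w
  proof -
    obtain v u where "w = f v" "v \<in> V" "v \<notin> S" "u \<in> S" "E' (f u) (f v)"
      using w unfolding boundary_def by blast
    then show ?thesis unfolding boundary_def using edges by blast
  qed
  have complement: "f ` V - f ` S = f ` (V - S)"
    using image_set_diff[OF inj] by simp
  show ?thesis
    unfolding off_alliance_def
  proof (intro conjI ballI)
    show "f ` S \<subseteq> f ` V" "f ` S \<noteq> {}"
      using S unfolding off_alliance_def by auto
    fix w assume "w \<in> boundary (f ` V) E' (f ` S)"
    then obtain v where "w = f v" "v \<in> boundary V E S" using boundary_image by blast
    then show "int (deltaS E' (f ` S) w) \<ge> int (deltaS E' (f ` V - f ` S) w) + k"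
      using S unfolding off_alliance_def complement by (simp add: deltaS_image)
  qed
qed

section \<open>Alliance free sets in the Cartesian product\<close>

lemma projection_not_alliance:
  assumes g1: "graph V1 E1" and g2: "graph V2 E2" and X1: "oaf V1 E1 k1 X1"
    and S: "S \<subseteq> V1 \<times> V2" "S \<noteq> {}" "fst ` S \<subseteq> X1"
    and k: "k1 - int (min_deg V2 E2) \<le> k"
  shows "\<not> off_alliance (V1 \<times> V2) (cart_edge E1 E2) k S"
proof
  assume alliance: "off_alliance (V1 \<times> V2) (cart_edge E1 E2) k S"
  let ?A = "fst ` S" and ?V = "V1 \<times> V2" and ?CE = "cart_edge E1 E2"
  have fin1: "finite V1" and finV: "finite ?V" and irr2: "\<forall>v. \<not> E2 v v"
    using g1 g2 unfolding graph_def by auto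
  have A_V1: "?A \<subseteq> V1" using S(1) by auto
  have "?A \<noteq> {}" using S(2) by simp
  then obtain a a' where a: "a' \<in> ?A" "E1 a' a" "a \<in> V1" "a \<notin> ?A"
    and violated: "int (deltaS E1 ?A a) < int (deltaS E1 (V1 - ?A) a) + k1"
    by (rule oaf_violating_vertex[OF X1 S(3)])
  obtain b where b: "(a', b) \<in> S" using a(1) by force
  have bV: "b \<in> V2" using b S(1) by auto
  have "(a, b) \<in> boundary ?V ?CE S"
    unfolding boundary_def cart_edge_def using a bV b by (force intro!: bexI[of _ "(a', b)"])
  then have in_alliance: "int (deltaS ?CE S (a, b)) \<ge> int (deltaS ?CE (?V - S) (a, b)) + k"
    using alliance unfolding off_alliance_def by blast
  have row_S: "{y. (a, y) \<in> S} = {}" and row_VS: "{y. (a, y) \<in> ?V - S} = V2"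
    using a by force+
  have "deltaS ?CE S (a, b) = deltaS E1 {x. (x, b) \<in> S} a"
    using deltaS_cart[of E2 S E1 a b, OF irr2 finite_subset[OF S(1) finV]] row_S
    by (simp add: deltaS_def)
  also have "\<dots> \<le> deltaS E1 ?A a"
    using finite_subset[OF A_V1 fin1] by (intro deltaS_mono) (auto intro: rev_image_eqI)
  finally have in_S: "deltaS ?CE S (a, b) \<le> deltaS E1 ?A a" .
  have "deltaS E1 (V1 - ?A) a \<le> deltaS E1 {x. (x, b) \<in> ?V - S} a"
    using finite_subset[of "{x. (x, b) \<in> ?V - S}" V1] fin1 bV
    by (intro deltaS_mono) (auto intro: rev_image_eqI)
  moreover have "deltaS ?CE (?V - S) (a, b) = deltaS E2 V2 b + deltaS E1 {x. (x, b) \<in> ?V - S} a"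
    using deltaS_cart[of E2 "?V - S" E1 a b, OF irr2] row_VS finV by simp
  moreover have "min_deg V2 E2 \<le> deltaS E2 V2 b" using min_deg_le_deltaS[OF g2 bV] .
  ultimately have "deltaS ?CE (?V - S) (a, b) \<ge> min_deg V2 E2 + deltaS E1 (V1 - ?A) a"
    by linarith
  then show False using in_alliance in_S violated k by linarith
qed

lemma row_not_alliance:
  assumes g1: "graph V1 E1" and g2: "graph V2 E2" and X2: "oaf V2 E2 k2 X2"
    and S: "S \<subseteq> V1 \<times> V2" "{y. (a, y) \<in> S} \<noteq> {}" "{y. (a, y) \<in> S} \<subseteq> X2"
    and k: "k2 + int (max_deg V1 E1) \<le> k"
  shows "\<not> off_alliance (V1 \<times> V2) (cart_edge E1 E2) k S"
proof
  assume alliance: "off_alliance (V1 \<times> V2) (cart_edge E1 E2) k S"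
  let ?R = "{y. (a, y) \<in> S}" and ?V = "V1 \<times> V2" and ?CE = "cart_edge E1 E2"
  have finV: "finite ?V" and irr2: "\<forall>v. \<not> E2 v v"
    using g1 g2 unfolding graph_def by auto
  have aV: "a \<in> V1" using S(1,2) by auto
  obtain b b' where b: "b' \<in> ?R" "E2 b' b" "b \<in> V2" "b \<notin> ?R"
    and violated: "int (deltaS E2 ?R b) < int (deltaS E2 (V2 - ?R) b) + k2"
    by (rule oaf_violating_vertex[OF X2 S(3,2)])
  have "(a, b) \<in> boundary ?V ?CE S"
    unfolding boundary_def cart_edge_def using aV b by (auto intro!: bexI[of _ "(a, b')"])
  then have in_alliance: "int (deltaS ?CE S (a, b)) \<ge> int (deltaS ?CE (?V - S) (a, b)) + k"
    using alliance unfolding off_alliance_def by blast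
  have "deltaS E1 {x. (x, b) \<in> S} a \<le> max_deg V1 E1"
    using S(1) by (intro deltaS_le_max_deg[OF g1 _ aV]) auto
  then have "deltaS ?CE S (a, b) \<le> deltaS E2 ?R b + max_deg V1 E1"
    using deltaS_cart[of E2 S E1 a b, OF irr2 finite_subset[OF S(1) finV]] by simp
  moreover have "{y. (a, y) \<in> ?V - S} = V2 - ?R" using aV by auto
  then have "deltaS ?CE (?V - S) (a, b) \<ge> deltaS E2 (V2 - ?R) b"
    using deltaS_cart[of E2 "?V - S" E1 a b, OF irr2] finV by simp
  ultimately show False using in_alliance violated k by linarith
qed

lemma product_oaf_one_side:
  assumes g1: "graph V1 E1" and g2: "graph V2 E2"
    and X1: "oaf V1 E1 k1 X1" and X2: "oaf V2 E2 k2 X2"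
    and k_min: "k1 - int (min_deg V2 E2) \<le> k" and k_max: "k2 + int (max_deg V1 E1) \<le> k"
  shows "oaf (V1 \<times> V2) (cart_edge E1 E2) k (X1 \<times> V2 \<union> V1 \<times> X2)"
  unfolding oaf_def
proof (intro conjI allI impI)
  show "X1 \<times> V2 \<union> V1 \<times> X2 \<subseteq> V1 \<times> V2"
    using X1 X2 unfolding oaf_def by auto
  fix S assume alliance: "off_alliance (V1 \<times> V2) (cart_edge E1 E2) k S"
  then have S: "S \<subseteq> V1 \<times> V2" "S \<noteq> {}" unfolding off_alliance_def by auto
  show "\<not> S \<subseteq> X1 \<times> V2 \<union> V1 \<times> X2"
  proof
    assume inX: "S \<subseteq> X1 \<times> V2 \<union> V1 \<times> X2"
    show False
    proof (cases "fst ` S \<subseteq> X1")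
      case True
      then show False
        using projection_not_alliance[OF g1 g2 X1 S True k_min] alliance by blast
    next
      case False
      then obtain a where "a \<in> fst ` S" "a \<notin> X1" by blast
      then have "{y. (a, y) \<in> S} \<noteq> {}" "{y. (a, y) \<in> S} \<subseteq> X2"
        using inX by force+
      then show False
        using row_not_alliance[OF g1 g2 X2 S(1) _ _ k_max] alliance by blast
    qed
  qed
qed

text \<open>Swapping coordinates is an isomorphism \<open>G\<^sub>1 \<times> G\<^sub>2 \<cong> G\<^sub>2 \<times> G\<^sub>1\<close>, so
  alliance free sets can be transported back along it.\<close>
lemma oaf_swap:
  assumes "oaf (V2 \<times> V1) (cart_edge E2 E1) k (prod.swap ` X)"
  shows "oaf (V1 \<times> V2) (cart_edge E1 E2) k X"
proof -
  have edges: "cart_edge E2 E1 (prod.swap u) (prod.swap v) \<longleftrightarrow> cart_edge E1 E2 u v" for u v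
    unfolding cart_edge_def by auto
  have "X \<subseteq> V1 \<times> V2"
    using assms unfolding oaf_def by (auto simp: image_subset_iff)
  moreover have "\<not> S \<subseteq> X" if "off_alliance (V1 \<times> V2) (cart_edge E1 E2) k S" for S
    using off_alliance_image[of prod.swap, OF _ edges that] assms
    unfolding oaf_def by (auto simp: product_swap dest: image_mono[of _ _ prod.swap])
  ultimately show ?thesis unfolding oaf_def by blast
qed

lemma product_oaf:
  assumes g1: "graph V1 E1" and g2: "graph V2 E2"
    and X1: "oaf V1 E1 k1 X1" and X2: "oaf V2 E2 k2 X2"
    and k_min1: "k1 - int (min_deg V2 E2) \<le> k" and k_min2: "k2 - int (min_deg V1 E1) \<le> k"
    and k_max: "k2 + int (max_deg V1 E1) \<le> k \<or> k1 + int (max_deg V2 E2) \<le> k"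
  shows "oaf (V1 \<times> V2) (cart_edge E1 E2) k (X1 \<times> V2 \<union> V1 \<times> X2)"
  using k_max
proof
  assume "k2 + int (max_deg V1 E1) \<le> k"
  then show ?thesis by (rule product_oaf_one_side[OF g1 g2 X1 X2 k_min1])
next
  assume "k1 + int (max_deg V2 E2) \<le> k"
  then have "oaf (V2 \<times> V1) (cart_edge E2 E1) k (X2 \<times> V1 \<union> V2 \<times> X1)"
    by (rule product_oaf_one_side[OF g2 g1 X2 X1 k_min2])
  moreover have "prod.swap ` (X1 \<times> V2 \<union> V1 \<times> X2) = X2 \<times> V1 \<union> V2 \<times> X1"
    by (auto simp: image_Un product_swap)
  ultimately show ?thesis
    using oaf_swap[of V2 V1 E2 E1 k "X1 \<times> V2 \<union> V1 \<times> X2"] by simp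
qed

lemma card_cross_union:
  assumes "finite V1" "finite V2" "X1 \<subseteq> V1" "X2 \<subseteq> V2"
  shows "int (card (X1 \<times> V2 \<union> V1 \<times> X2))
           = int (card V2) * int (card X1) + int (card V1) * int (card X2)
             - int (card X1) * int (card X2)"
proof -
  have "finite (X1 \<times> V2)" "finite (V1 \<times> X2)"
    using assms by (auto intro: finite_subset)
  moreover have "X1 \<times> V2 \<inter> V1 \<times> X2 = X1 \<times> X2" using assms by auto
  ultimately have "card (X1 \<times> V2 \<union> V1 \<times> X2) + card (X1 \<times> X2)
                     = card (X1 \<times> V2) + card (V1 \<times> X2)"
    using card_Un_Int by metis
  then have "int (card (X1 \<times> V2 \<union> V1 \<times> X2)) + int (card X1) * int (card X2)
               = int (card X1) * int (card V2) + int (card V1) * int (card X2)"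
    unfolding card_cartesian_product by (metis of_nat_add of_nat_mult)
  then show ?thesis by (simp add: algebra_simps)
qed

theorem corollary4:
  fixes V1 :: "'a set" and E1 :: "'a \<Rightarrow> 'a \<Rightarrow> bool"
    and V2 :: "'b set" and E2 :: "'b \<Rightarrow> 'b \<Rightarrow> bool"
    and k1 k2 k :: int
  assumes g1: "graph V1 E1" and g2: "graph V2 E2"
    and ne1: "V1 \<noteq> {}" and ne2: "V2 \<noteq> {}"
    and k1: "2 - int (max_deg V1 E1) \<le> k1" "k1 \<le> int (max_deg V1 E1)"
    and k2: "2 - int (max_deg V2 E2) \<le> k2" "k2 \<le> int (max_deg V2 E2)"
    and klo: "max (k1 - int (min_deg V2 E2))
                (max (k2 - int (min_deg V1 E1))
                     (min (k2 + int (max_deg V1 E1)) (k1 + int (max_deg V2 E2)))) \<le> k"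
    and khi: "k \<le> int (max_deg V1 E1) + int (max_deg V2 E2)"
  shows "int (phi_o (V1 \<times> V2) (cart_edge E1 E2) k) \<ge>
           int (card V1) * int (phi_o V2 E2 k2) + int (card V2) * int (phi_o V1 E1 k1)
           - int (phi_o V1 E1 k1) * int (phi_o V2 E2 k2)"
proof -
  obtain X1 where X1: "oaf V1 E1 k1 X1" "card X1 = phi_o V1 E1 k1"
    using phi_o_attained[OF g1] .
  obtain X2 where X2: "oaf V2 E2 k2 X2" "card X2 = phi_o V2 E2 k2"
    using phi_o_attained[OF g2] .
  have fin: "finite V1" "finite V2" using g1 g2 unfolding graph_def by auto
  have "oaf (V1 \<times> V2) (cart_edge E1 E2) k (X1 \<times> V2 \<union> V1 \<times> X2)"
    using klo by (intro product_oaf[OF g1 g2 X1(1) X2(1)]) (simp_all add: min_le_iff_disj)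
  then have "card (X1 \<times> V2 \<union> V1 \<times> X2) \<le> phi_o (V1 \<times> V2) (cart_edge E1 E2) k"
    using fin by (intro card_le_phi_o) auto
  moreover have "X1 \<subseteq> V1" "X2 \<subseteq> V2" using X1(1) X2(1) unfolding oaf_def by auto
  moreover note card_cross_union[OF fin this]
  ultimately show ?thesis
    unfolding X1(2)[symmetric] X2(2)[symmetric] by linarith
qed

end
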